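(* Let $G=\langle g,h\rangle$ be a non-cyclic torsion-free group. Let $G_1=\langle g_1,h_1\rangle$ and $G_2=\langle g_2,h_2\rangle$ be two copies of $G$ (with $g_i,h_i$ corresponding to $g,h$), and let $H=G_1*_{\langle g_1\rangle=\langle g_2\rangle}G_2$ be the free product with amalgamation in which $g_1$ is identified with $g_2$; write $g$ for this common element of $H$. Let $K=\langle h_2^{-1}h_1,g\rangle\le H$. Then for every nonzero $n\in\mathbb{Z}$, \[(h_2^{-1}h_1)^n\notin\langle\langle g\rangle\rangle_K.\]
   Context: $\langle\langle g\rangle\rangle_K$ denotes the normal closure of $g$ in $K$. *)

theory Defs
  imports "HOL-Algebra.Algebra"
begin

text \<open>Amalgamated free product of two copies of a group G along a subgroup S,
  the subgroup S of the first copy being identified with S in the second copy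
  via the identity map.  Realised as a presentation: words over the disjoint union
  of two copies of carrier G (letter (x,True) is x in copy 1, (x,False) is x in copy 2)
  modulo the smallest congruence (w.r.t. concatenation) identifying
  [(x,b),(y,b)] with [(x*y,b)], [(1,b)] with the empty word, and
  [(s,True)] with [(s,False)] for s in S.\<close>

inductive amal_eq :: "('a, 'b) monoid_scheme \<Rightarrow> 'a set \<Rightarrow> ('a \<times> bool) list \<Rightarrow> ('a \<times> bool) list \<Rightarrow> bool"
  for G S where
  refl: "amal_eq G S w w"
| sym: "amal_eq G S u v \<Longrightarrow> amal_eq G S v u"
| trans: "amal_eq G S u v \<Longrightarrow> amal_eq G S v w \<Longrightarrow> amal_eq G S u w"
| cong: "amal_eq G S u v \<Longrightarrow> amal_eq G S (a @ u @ c) (a @ v @ c)"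
| mult: "x \<in> carrier G \<Longrightarrow> y \<in> carrier G \<Longrightarrow> amal_eq G S [(x, b), (y, b)] [(x \<otimes>\<^bsub>G\<^esub> y, b)]"
| one: "amal_eq G S [(\<one>\<^bsub>G\<^esub>, b)] []"
| amal: "s \<in> S \<Longrightarrow> amal_eq G S [(s, True)] [(s, False)]"

definition amal_class :: "('a, 'b) monoid_scheme \<Rightarrow> 'a set \<Rightarrow> ('a \<times> bool) list \<Rightarrow> ('a \<times> bool) list set"
  where "amal_class G S w = {v. amal_eq G S w v}"

definition amal_mult :: "('a, 'b) monoid_scheme \<Rightarrow> 'a set \<Rightarrow> ('a \<times> bool) list set \<Rightarrow> ('a \<times> bool) list set \<Rightarrow> ('a \<times> bool) list set"
  where "amal_mult G S A B = {w. \<exists>u\<in>A. \<exists>v\<in>B. amal_eq G S (u @ v) w}"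

definition amalgam :: "('a, 'b) monoid_scheme \<Rightarrow> 'a set \<Rightarrow> (('a \<times> bool) list set) monoid"
  where "amalgam G S =
    \<lparr> carrier = {amal_class G S w | w. set w \<subseteq> carrier G \<times> UNIV},
      monoid.mult = amal_mult G S,
      one = amal_class G S [] \<rparr>"

definition amal_in :: "('a, 'b) monoid_scheme \<Rightarrow> 'a set \<Rightarrow> bool \<Rightarrow> 'a \<Rightarrow> ('a \<times> bool) list set"
  where "amal_in G S b x = amal_class G S [(x, b)]"

definition normal_closure_in :: "('c, 'd) monoid_scheme \<Rightarrow> 'c set \<Rightarrow> 'c \<Rightarrow> 'c set"
  where "normal_closure_in H K x =
    generate (H\<lparr>carrier := K\<rparr>) {k \<otimes>\<^bsub>H\<^esub> x \<otimes>\<^bsub>H\<^esub> inv\<^bsub>H\<^esub> k | k. k \<in> K}"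

end

theory Submission
  imports Defs "HOL-Library.Indicator_Function"
begin

(* Let C = <g>; as G is not cyclic, h is not in C.  Map H to the semidirect product of the
   G-module Z^(G/C) by G: send x in the first copy to (0, x) and x in the second copy to
   (\<delta> - x\<delta>, x), where \<delta> is the indicator of the coset C.  The second map is a homomorphism
   because x \<mapsto> \<delta> - x\<delta> is a coboundary, and the two maps agree on C because C fixes the
   coset C, so together they define a homomorphism on H.  On the elements whose G-component
   lies in C, in particular on K, the coefficient at the coset C is additive, i.e. a
   homomorphism K \<rightarrow> Z.  It vanishes on g, hence on the normal closure of g in K, but takes
   the value n on (h2^-1 h1)^n, since h2^-1 h1 maps to (\<delta> - h^-1 \<delta>, 1) and h \<notin> C. *)

lemma (in group) notin_generate_singleton_if_noncyclic:
  assumes "carrier G = generate G {g, h}" "g \<in> carrier G"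
    and "\<not> (\<exists>x \<in> carrier G. carrier G = generate G {x})"
  shows "h \<notin> generate G {g}"
proof
  assume "h \<in> generate G {g}"
  then have "generate G {g, h} \<subseteq> generate G {g}"
    using assms(2) by (intro generate_subgroup_incl generate_is_subgroup) (auto intro: generate.incl)
  moreover have "generate G {g} \<subseteq> carrier G"
    using assms(2) by (intro generate_incl) simp
  ultimately show False
    using assms by auto
qed

lemma (in group_hom) compose_hom_on_generate:
  assumes "A \<subseteq> carrier G" "subgroup J H" "h ` A \<subseteq> J" "\<psi> \<in> hom (H\<lparr>carrier := J\<rparr>) M"
  shows "\<psi> \<circ> h \<in> hom (G\<lparr>carrier := generate G A\<rparr>) M"
proof -
  have "h ` generate G A \<subseteq> J"
    using assms(1,2,3) by (simp add: generate_img[symmetric] H.generate_subgroup_incl)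
  moreover have "generate G A \<subseteq> carrier G"
    using assms(1) by (rule G.generate_incl)
  ultimately show ?thesis
    using assms(4) by (fastforce simp: hom_def Pi_iff subset_iff)
qed

lemma (in group) normal_closure_in_subset_kernel:
  assumes "subgroup K G" "x \<in> K" "group A" "\<phi> \<in> hom (G\<lparr>carrier := K\<rparr>) A" "\<phi> x = \<one>\<^bsub>A\<^esub>"
  shows "normal_closure_in G K x \<subseteq> kernel (G\<lparr>carrier := K\<rparr>) A \<phi>"
proof -
  interpret K: group "G\<lparr>carrier := K\<rparr>"
    using assms(1) by (rule subgroup_imp_group)
  interpret \<phi>: group_hom "G\<lparr>carrier := K\<rparr>" A \<phi>
    using assms(3,4) by (simp add: group_hom_def group_hom_axioms_def K.is_group)
  have "k \<otimes> x \<otimes> inv k \<in> kernel (G\<lparr>carrier := K\<rparr>) A \<phi>" if "k \<in> K" for k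
  proof -
    have k: "k \<in> carrier (G\<lparr>carrier := K\<rparr>)" and x: "x \<in> carrier (G\<lparr>carrier := K\<rparr>)"
      using that assms(2) by simp_all
    have conj: "k \<otimes> x \<otimes> inv k = k \<otimes>\<^bsub>G\<lparr>carrier := K\<rparr>\<^esub> x \<otimes>\<^bsub>G\<lparr>carrier := K\<rparr>\<^esub> inv\<^bsub>G\<lparr>carrier := K\<rparr>\<^esub> k"
      using assms(1) that by simp
    have "\<phi> (k \<otimes>\<^bsub>G\<lparr>carrier := K\<rparr>\<^esub> x \<otimes>\<^bsub>G\<lparr>carrier := K\<rparr>\<^esub> inv\<^bsub>G\<lparr>carrier := K\<rparr>\<^esub> k)
        = \<phi> k \<otimes>\<^bsub>A\<^esub> \<phi> x \<otimes>\<^bsub>A\<^esub> inv\<^bsub>A\<^esub> \<phi> k"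
      by (simp only: \<phi>.hom_mult[OF K.m_closed[OF k x] K.inv_closed[OF k]] \<phi>.hom_mult[OF k x]
          \<phi>.hom_inv[OF k])
    also have "\<dots> = \<one>\<^bsub>A\<^esub>"
      using k assms(5) by simp
    finally show ?thesis
      unfolding conj kernel_def using K.m_closed[OF K.m_closed[OF k x] K.inv_closed[OF k]] by blast
  qed
  then show ?thesis
    unfolding normal_closure_in_def by (intro K.generate_subgroup_incl \<phi>.subgroup_kernel) auto
qed

lemma (in group) int_pow_notin_normal_closure_in:
  fixes n :: int
  assumes "subgroup K G" "x \<in> K" "y \<in> K" "\<phi> \<in> hom (G\<lparr>carrier := K\<rparr>) integer_group"
    and "\<phi> x = 0" "\<phi> y \<noteq> 0" "n \<noteq> 0"
  shows "y [^] n \<notin> normal_closure_in G K x"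
proof
  assume "y [^] n \<in> normal_closure_in G K x"
  then have "\<phi> (y [^] n) = 0"
    using normal_closure_in_subset_kernel[OF assms(1,2) group_integer_group assms(4)] assms(5)
    by (auto simp: kernel_def)
  moreover have "\<phi> (y [^] n) = n * \<phi> y"
    using hom_int_pow[OF assms(4), of y n] assms(1,3) subgroup_imp_group[OF assms(1)]
    by (simp add: int_pow_consistent)
  ultimately show False
    using assms(6,7) by simp
qed

lemma amal_eq_append:
  "amal_eq G S u u' \<Longrightarrow> amal_eq G S v v' \<Longrightarrow> amal_eq G S (u @ v) (u' @ v')"
  using amal_eq.cong[of G S u u' "[]" v] amal_eq.cong[of G S v v' u' "[]"] amal_eq.trans
  by fastforce

lemma mem_amal_class_iff: "v \<in> amal_class G S u \<longleftrightarrow> amal_eq G S u v"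
  by (simp add: amal_class_def)

lemma amal_class_eq_iff: "amal_class G S u = amal_class G S v \<longleftrightarrow> amal_eq G S u v"
proof
  assume "amal_class G S u = amal_class G S v"
  then show "amal_eq G S u v"
    using amal_eq.refl[of G S v] by (simp add: mem_amal_class_iff[symmetric])
next
  assume uv: "amal_eq G S u v"
  show "amal_class G S u = amal_class G S v"
  proof (rule Set.set_eqI)
    fix w
    show "w \<in> amal_class G S u \<longleftrightarrow> w \<in> amal_class G S v"
      unfolding mem_amal_class_iff
      using amal_eq.trans[OF uv] amal_eq.trans[OF amal_eq.sym[OF uv]] by blast
  qed
qed

lemma carrier_amalgam: "carrier (amalgam G S) = {amal_class G S w | w. set w \<subseteq> carrier G \<times> UNIV}"
  by (simp add: amalgam_def)

lemma one_amalgam: "\<one>\<^bsub>amalgam G S\<^esub> = amal_class G S []"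
  by (simp add: amalgam_def)

lemma mult_amalgam_class:
  "amal_class G S u \<otimes>\<^bsub>amalgam G S\<^esub> amal_class G S v = amal_class G S (u @ v)"
proof (rule Set.set_eqI)
  fix w
  have "(\<exists>u' v'. amal_eq G S u u' \<and> amal_eq G S v v' \<and> amal_eq G S (u' @ v') w)
        \<longleftrightarrow> amal_eq G S (u @ v) w"
    using amal_eq.trans[OF amal_eq_append] amal_eq.refl by blast
  then show "w \<in> amal_class G S u \<otimes>\<^bsub>amalgam G S\<^esub> amal_class G S v \<longleftrightarrow> w \<in> amal_class G S (u @ v)"
    by (simp add: amalgam_def amal_mult_def Bex_def mem_amal_class_iff)
qed

lemma amal_class_in_carrier:
  "set w \<subseteq> carrier G \<times> UNIV \<Longrightarrow> amal_class G S w \<in> carrier (amalgam G S)"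
  by (auto simp: carrier_amalgam)

lemma (in group) amal_eq_inv_letter:
  assumes "x \<in> carrier G"
  shows "amal_eq G S [(inv x, b), (x, b)] []"
proof -
  have "amal_eq G S [(inv x, b), (x, b)] [(\<one>, b)]"
    using amal_eq.mult[of "inv x" G x S b] assms by simp
  then show ?thesis
    using amal_eq.one by (rule amal_eq.trans)
qed

lemma (in group) amal_eq_inverse_word:
  "set w \<subseteq> carrier G \<times> UNIV \<Longrightarrow> amal_eq G S (rev (map (\<lambda>(x, b). (inv x, b)) w) @ w) []"
proof (induction w)
  case Nil
  show ?case by (simp add: amal_eq.refl)
next
  case (Cons a w)
  obtain x b where a: "a = (x, b)" by force
  let ?w' = "rev (map (\<lambda>(x, b). (inv x, b)) w)"
  have "amal_eq G S (?w' @ [(inv x, b), (x, b)] @ w) (?w' @ [] @ w)"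
    using Cons.prems a by (intro amal_eq.cong amal_eq_inv_letter) auto
  moreover have "amal_eq G S (?w' @ w) []"
    using Cons.prems by (intro Cons.IH) auto
  ultimately show ?case
    using amal_eq.trans a by simp
qed

lemma (in group) group_amalgam: "group (amalgam G S)"
proof (rule groupI)
  fix x y
  assume "x \<in> carrier (amalgam G S)" "y \<in> carrier (amalgam G S)"
  then obtain u v where "x = amal_class G S u" "set u \<subseteq> carrier G \<times> UNIV"
    and "y = amal_class G S v" "set v \<subseteq> carrier G \<times> UNIV"
    by (auto simp: carrier_amalgam)
  then show "x \<otimes>\<^bsub>amalgam G S\<^esub> y \<in> carrier (amalgam G S)"
    by (simp add: mult_amalgam_class amal_class_in_carrier)
next
  fix x
  assume "x \<in> carrier (amalgam G S)"
  then obtain w where w: "x = amal_class G S w" "set w \<subseteq> carrier G \<times> UNIV"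
    by (auto simp: carrier_amalgam)
  let ?w' = "rev (map (\<lambda>(x, b). (inv x, b)) w)"
  have "amal_class G S ?w' \<otimes>\<^bsub>amalgam G S\<^esub> x = \<one>\<^bsub>amalgam G S\<^esub>"
    using amal_eq_inverse_word[OF w(2)]
    by (simp add: w(1) mult_amalgam_class one_amalgam amal_class_eq_iff)
  moreover have "amal_class G S ?w' \<in> carrier (amalgam G S)"
    using w(2) by (intro amal_class_in_carrier) auto
  ultimately show "\<exists>y \<in> carrier (amalgam G S). y \<otimes>\<^bsub>amalgam G S\<^esub> x = \<one>\<^bsub>amalgam G S\<^esub>"
    by blast
qed (auto simp: carrier_amalgam one_amalgam mult_amalgam_class)

lemma (in group) amal_in_hom: "amal_in G S b \<in> hom G (amalgam G S)"
proof (rule homI)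
  fix x y
  assume "x \<in> carrier G" "y \<in> carrier G"
  then show "amal_in G S b (x \<otimes> y) = amal_in G S b x \<otimes>\<^bsub>amalgam G S\<^esub> amal_in G S b y"
    by (simp add: amal_in_def mult_amalgam_class amal_class_eq_iff amal_eq.sym amal_eq.mult)
qed (simp add: amal_in_def amal_class_in_carrier)

locale amalgam_extension = G: group G + L: group L
  for G :: "('a, 'b) monoid_scheme" and S :: "'a set" and L :: "('c, 'd) monoid_scheme"
  and f1 f2 :: "'a \<Rightarrow> 'c" +
  assumes hom1: "f1 \<in> hom G L" and hom2: "f2 \<in> hom G L"
    and agree: "\<And>s. s \<in> S \<Longrightarrow> s \<in> carrier G \<Longrightarrow> f1 s = f2 s"
begin

(* Words related by amal_eq may contain letters outside carrier G (rule cong); these are sent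
   to the unit. *)
definition letter_image :: "'a \<times> bool \<Rightarrow> 'c" where
  "letter_image a = (if fst a \<in> carrier G then (if snd a then f1 else f2) (fst a) else \<one>\<^bsub>L\<^esub>)"

definition word_image :: "('a \<times> bool) list \<Rightarrow> 'c" where
  "word_image w = foldr (\<lambda>a r. letter_image a \<otimes>\<^bsub>L\<^esub> r) w \<one>\<^bsub>L\<^esub>"

definition extension :: "('a \<times> bool) list set \<Rightarrow> 'c" where
  "extension A = word_image (SOME w. w \<in> A)"

lemma letter_image_closed: "letter_image a \<in> carrier L"
  using hom1 hom2 by (simp add: letter_image_def hom_in_carrier)

lemma word_image_closed: "word_image w \<in> carrier L"
  by (induction w) (simp_all add: word_image_def letter_image_closed)

lemma word_image_Cons: "word_image (a # w) = letter_image a \<otimes>\<^bsub>L\<^esub> word_image w"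
  by (simp add: word_image_def)

lemma word_image_append: "word_image (u @ v) = word_image u \<otimes>\<^bsub>L\<^esub> word_image v"
proof (induction u)
  case Nil
  then show ?case by (simp add: word_image_closed) (simp add: word_image_def)
next
  case (Cons a u)
  then show ?case by (simp add: word_image_Cons word_image_closed letter_image_closed L.m_assoc)
qed

lemma letter_image_mult:
  assumes "x \<in> carrier G" "y \<in> carrier G"
  shows "letter_image (x, b) \<otimes>\<^bsub>L\<^esub> letter_image (y, b) = letter_image (x \<otimes>\<^bsub>G\<^esub> y, b)"
  using assms hom1 hom2 by (simp add: letter_image_def hom_mult)

lemma letter_image_one: "letter_image (\<one>\<^bsub>G\<^esub>, b) = \<one>\<^bsub>L\<^esub>"
  using hom1 hom2 G.is_group L.is_group
  by (simp add: letter_image_def group_hom.hom_one group_hom_axioms.intro group_hom_def)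

lemma word_image_singleton: "word_image [a] = letter_image a"
  by (simp add: word_image_def letter_image_closed)

lemma amal_eq_word_image: "amal_eq G S u v \<Longrightarrow> word_image u = word_image v"
proof (induction rule: amal_eq.induct)
  case (cong u v a c)
  then show ?case by (simp add: word_image_append)
next
  case (mult x y b)
  have "word_image [(x, b), (y, b)] = letter_image (x, b) \<otimes>\<^bsub>L\<^esub> letter_image (y, b)"
    by (simp only: word_image_Cons[of _ "[_]"] word_image_singleton)
  with mult show ?case by (simp add: letter_image_mult word_image_singleton)
next
  case (one b)
  show ?case by (simp add: word_image_singleton letter_image_one) (simp add: word_image_def)
next
  case (amal s)
  then show ?case
    by (cases "s \<in> carrier G") (simp_all add: word_image_singleton letter_image_def agree)
next
  case (sym u v)
  show ?case using sym.IH by (rule HOL.sym)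
next
  case (trans u v w)
  show ?case using trans.IH by (rule HOL.trans)
qed (rule HOL.refl)

lemma extension_class: "extension (amal_class G S w) = word_image w"
proof -
  have "(SOME v. v \<in> amal_class G S w) \<in> amal_class G S w"
    by (rule someI[of _ w]) (simp add: mem_amal_class_iff amal_eq.refl)
  then have "amal_eq G S w (SOME v. v \<in> amal_class G S w)"
    by (simp add: amal_class_def)
  then show ?thesis
    unfolding extension_def by (rule amal_eq_word_image[symmetric])
qed

lemma extension_hom: "extension \<in> hom (amalgam G S) L"
proof (rule homI)
  fix x
  assume "x \<in> carrier (amalgam G S)"
  then show "extension x \<in> carrier L"
    by (auto simp: carrier_amalgam extension_class word_image_closed)
next
  fix x y
  assume "x \<in> carrier (amalgam G S)" "y \<in> carrier (amalgam G S)"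
  then obtain u v where "x = amal_class G S u" "y = amal_class G S v"
    unfolding carrier_amalgam by blast
  then show "extension (x \<otimes>\<^bsub>amalgam G S\<^esub> y) = extension x \<otimes>\<^bsub>L\<^esub> extension y"
    by (simp add: mult_amalgam_class extension_class word_image_append)
qed

lemma extension_amal_in: "x \<in> carrier G \<Longrightarrow> extension (amal_in G S b x) = (if b then f1 x else f2 x)"
  using hom1 hom2
  by (simp add: amal_in_def extension_class word_image_singleton letter_image_def)

end

locale coset_semidirect = group G for G (structure) +
  fixes C :: "'a set"
  assumes subgroup_C: "subgroup C G"
begin

(* Functions on G/C are modelled as right C-invariant functions on G vanishing outside the
   carrier; G acts on them by left translation. *)
definition coset_function :: "('a \<Rightarrow> int) \<Rightarrow> bool" where
  "coset_function F \<longleftrightarrow>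
     (\<forall>q. q \<notin> carrier G \<longrightarrow> F q = 0) \<and> (\<forall>q \<in> carrier G. \<forall>c \<in> C. F (q \<otimes> c) = F q)"

definition translate :: "'a \<Rightarrow> ('a \<Rightarrow> int) \<Rightarrow> 'a \<Rightarrow> int" where
  "translate p F q = (if q \<in> carrier G then F (inv p \<otimes> q) else 0)"

definition semidirect :: "(('a \<Rightarrow> int) \<times> 'a) monoid" where
  "semidirect =
    \<lparr>carrier = {(F, x). coset_function F \<and> x \<in> carrier G},
     monoid.mult = (\<lambda>(F, x) (F', y). (\<lambda>q. F q + translate x F' q, x \<otimes> y)),
     one = (\<lambda>_. 0, \<one>)\<rparr>"

lemma C_subset: "C \<subseteq> carrier G"
  using subgroup_C by (rule subgroup.subset)

lemma carrier_semidirect [simp]: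
  "(F, x) \<in> carrier semidirect \<longleftrightarrow> coset_function F \<and> x \<in> carrier G"
  by (simp add: semidirect_def)

lemma mult_semidirect [simp]:
  "(F, x) \<otimes>\<^bsub>semidirect\<^esub> (F', y) = (\<lambda>q. F q + translate x F' q, x \<otimes> y)"
  by (simp add: semidirect_def)

lemma one_semidirect [simp]: "\<one>\<^bsub>semidirect\<^esub> = (\<lambda>_. 0, \<one>)"
  by (simp add: semidirect_def)

lemma translate_mult:
  "x \<in> carrier G \<Longrightarrow> y \<in> carrier G \<Longrightarrow> translate (x \<otimes> y) F = translate x (translate y F)"
  by (auto simp: translate_def fun_eq_iff inv_mult_group m_assoc)

lemma translate_one: "coset_function F \<Longrightarrow> translate \<one> F = F"
  by (auto simp: translate_def coset_function_def fun_eq_iff)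

lemma translate_add: "translate x (\<lambda>q. F q + F' q) q = translate x F q + translate x F' q"
  by (simp add: translate_def)

lemma translate_diff: "translate x (\<lambda>q. F q - F' q) q = translate x F q - translate x F' q"
  by (simp add: translate_def)

lemma coset_function_translate:
  assumes "coset_function F" "x \<in> carrier G"
  shows "coset_function (translate x F)"
  using assms C_subset unfolding coset_function_def translate_def
  by (auto simp: m_assoc[symmetric] subset_iff)

lemma coset_function_add:
  "coset_function F \<Longrightarrow> coset_function F' \<Longrightarrow> coset_function (\<lambda>q. F q + F' q)"
  by (simp add: coset_function_def)

lemma coset_function_diff:
  "coset_function F \<Longrightarrow> coset_function F' \<Longrightarrow> coset_function (\<lambda>q. F q - F' q)"
  by (simp add: coset_function_def)

lemma coset_function_uminus: "coset_function F \<Longrightarrow> coset_function (\<lambda>q. - F q)"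
  by (simp add: coset_function_def)

lemma coset_function_indicator: "coset_function (indicator C)"
proof -
  have "q \<otimes> c \<in> C \<longleftrightarrow> q \<in> C" if "q \<in> carrier G" "c \<in> C" for q c
    using that subgroup_C C_subset
    by (metis subgroup.mem_carrier subgroup.m_closed subgroup.m_inv_closed inv_solve_right)
  then show ?thesis
    using C_subset by (auto simp: coset_function_def indicator_def)
qed

lemma group_semidirect: "group semidirect"
proof (rule groupI)
  fix a b
  assume "a \<in> carrier semidirect" "b \<in> carrier semidirect"
  then show "a \<otimes>\<^bsub>semidirect\<^esub> b \<in> carrier semidirect"
    by (cases a, cases b) (simp add: coset_function_add coset_function_translate)
next
  fix a b c
  assume "a \<in> carrier semidirect" "b \<in> carrier semidirect" "c \<in> carrier semidirect"
  then show "a \<otimes>\<^bsub>semidirect\<^esub> b \<otimes>\<^bsub>semidirect\<^esub> c = a \<otimes>\<^bsub>semidirect\<^esub> (b \<otimes>\<^bsub>semidirect\<^esub> c)"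
    by (cases a, cases b, cases c)
      (simp add: translate_add translate_mult m_assoc add.assoc)
next
  fix a
  assume a: "a \<in> carrier semidirect"
  then obtain F x where F: "a = (F, x)" "coset_function F" "x \<in> carrier G"
    by (cases a) auto
  let ?b = "(\<lambda>q. - translate (inv x) F q, inv x)"
  have "coset_function (\<lambda>q. - translate (inv x) F q)"
    using F by (simp add: coset_function_uminus coset_function_translate)
  moreover have "?b \<otimes>\<^bsub>semidirect\<^esub> a = \<one>\<^bsub>semidirect\<^esub>"
    using F by (auto simp: translate_def fun_eq_iff)
  ultimately show "\<exists>b \<in> carrier semidirect. b \<otimes>\<^bsub>semidirect\<^esub> a = \<one>\<^bsub>semidirect\<^esub>"
    using F(3) by (intro bexI[of _ ?b]) auto
qed (auto simp: coset_function_def translate_one translate_def)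

lemma translate_indicator_subgroup:
  assumes "c \<in> C"
  shows "translate c (indicator C) = indicator C"
proof -
  have "inv c \<otimes> q \<in> C \<longleftrightarrow> q \<in> C" if "q \<in> carrier G" for q
    using that assms subgroup_C C_subset
    by (metis subgroup.mem_carrier subgroup.m_closed subgroup.m_inv_closed inv_solve_left)
  then show ?thesis
    using C_subset by (auto simp: translate_def indicator_def fun_eq_iff)
qed

definition embed :: "'a \<Rightarrow> ('a \<Rightarrow> int) \<times> 'a" where
  "embed x = (\<lambda>_. 0, x)"

(* The first component is the coboundary of the indicator of the coset C. *)
definition twisted_embed :: "'a \<Rightarrow> ('a \<Rightarrow> int) \<times> 'a" where
  "twisted_embed x = (\<lambda>q. indicator C q - translate x (indicator C) q, x)"

lemma embed_hom: "embed \<in> hom G semidirect"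
  by (rule homI) (auto simp: embed_def coset_function_def translate_def)

lemma twisted_embed_hom: "twisted_embed \<in> hom G semidirect"
proof (rule homI)
  fix x
  assume "x \<in> carrier G"
  then show "twisted_embed x \<in> carrier semidirect"
    by (simp add: twisted_embed_def coset_function_diff coset_function_indicator
        coset_function_translate)
next
  fix x y
  assume "x \<in> carrier G" "y \<in> carrier G"
  then show "twisted_embed (x \<otimes> y) = twisted_embed x \<otimes>\<^bsub>semidirect\<^esub> twisted_embed y"
    by (simp add: twisted_embed_def translate_diff translate_mult)
qed

lemma embed_eq_twisted_embed: "c \<in> C \<Longrightarrow> embed c = twisted_embed c"
  by (simp add: embed_def twisted_embed_def translate_indicator_subgroup)

definition coset_stabiliser :: "(('a \<Rightarrow> int) \<times> 'a) set" where
  "coset_stabiliser = {(F, c). coset_function F \<and> c \<in> C}"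

lemma inv_semidirect:
  assumes "coset_function F" "x \<in> carrier G"
  shows "inv\<^bsub>semidirect\<^esub> (F, x) = (\<lambda>q. - translate (inv x) F q, inv x)"
proof (rule group.inv_equality[OF group_semidirect])
  show "(\<lambda>q. - translate (inv x) F q, inv x) \<otimes>\<^bsub>semidirect\<^esub> (F, x) = \<one>\<^bsub>semidirect\<^esub>"
    using assms by (auto simp: translate_def fun_eq_iff)
  show "(\<lambda>q. - translate (inv x) F q, inv x) \<in> carrier semidirect"
    using assms by (simp add: coset_function_uminus coset_function_translate)
qed (use assms in simp)

lemma subgroup_coset_stabiliser: "subgroup coset_stabiliser semidirect"
proof (rule group.subgroupI[OF group_semidirect])
  show "coset_stabiliser \<subseteq> carrier semidirect"
    using C_subset by (auto simp: coset_stabiliser_def)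
  show "coset_stabiliser \<noteq> {}"
    using subgroup.one_closed[OF subgroup_C] by (auto simp: coset_stabiliser_def coset_function_def)
next
  fix a
  assume "a \<in> coset_stabiliser"
  then obtain F c where "a = (F, c)" "coset_function F" "c \<in> C"
    by (auto simp: coset_stabiliser_def)
  then show "inv\<^bsub>semidirect\<^esub> a \<in> coset_stabiliser"
    using C_subset subgroup_C
    by (auto simp: coset_stabiliser_def inv_semidirect subgroup.m_inv_closed
        coset_function_uminus coset_function_translate)
next
  fix a b
  assume "a \<in> coset_stabiliser" "b \<in> coset_stabiliser"
  then show "a \<otimes>\<^bsub>semidirect\<^esub> b \<in> coset_stabiliser"
    using C_subset subgroup_C
    by (cases a, cases b)
      (auto simp: coset_stabiliser_def coset_function_add coset_function_translate subgroup.m_closed)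
qed

end

sublocale coset_semidirect \<subseteq> amalgam_extension G C semidirect embed twisted_embed
  by (intro amalgam_extension.intro amalgam_extension_axioms.intro)
    (simp_all add: is_group group_semidirect embed_hom twisted_embed_hom embed_eq_twisted_embed)

context coset_semidirect
begin

lemma coset_coefficient_hom:
  "(\<lambda>(F, c). F \<one>) \<in> hom (semidirect\<lparr>carrier := coset_stabiliser\<rparr>) integer_group"
proof (rule homI)
  fix a b
  assume "a \<in> carrier (semidirect\<lparr>carrier := coset_stabiliser\<rparr>)"
    and "b \<in> carrier (semidirect\<lparr>carrier := coset_stabiliser\<rparr>)"
  then obtain F c F' c' where ab: "a = (F, c)" "b = (F', c')" "c \<in> C" "coset_function F'"
    by (auto simp: coset_stabiliser_def)
  have "inv c \<in> C"
    using ab(3) subgroup_C by (rule subgroup.m_inv_closed[rotated])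
  then have "F' (\<one> \<otimes> inv c) = F' \<one>"
    using ab(4) unfolding coset_function_def by blast
  then have "F' (inv c \<otimes> \<one>) = F' \<one>"
    using \<open>inv c \<in> C\<close> C_subset by auto
  then show "(case a \<otimes>\<^bsub>semidirect\<lparr>carrier := coset_stabiliser\<rparr>\<^esub> b of (F, c) \<Rightarrow> F \<one>) =
      (case a of (F, c) \<Rightarrow> F \<one>) \<otimes>\<^bsub>integer_group\<^esub> (case b of (F, c) \<Rightarrow> F \<one>)"
    by (simp add: ab translate_def)
qed simp

definition coset_count :: "('a \<times> bool) list set \<Rightarrow> int" where
  "coset_count = (\<lambda>(F, c). F \<one>) \<circ> extension"

lemma coset_count_hom:
  assumes "A \<subseteq> carrier (amalgam G C)" "extension ` A \<subseteq> coset_stabiliser"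
  shows "coset_count \<in> hom ((amalgam G C)\<lparr>carrier := generate (amalgam G C) A\<rparr>) integer_group"
proof -
  have "group_hom (amalgam G C) semidirect extension"
    by (simp add: group_hom_def group_hom_axioms_def group_amalgam group_semidirect extension_hom)
  then show ?thesis
    unfolding coset_count_def
    using assms(1) subgroup_coset_stabiliser assms(2) coset_coefficient_hom
    by (rule group_hom.compose_hom_on_generate)
qed

lemma coset_count_amal_in_subgroup:
  assumes "c \<in> C"
  shows "extension (amal_in G C True c) \<in> coset_stabiliser" "coset_count (amal_in G C True c) = 0"
  using assms C_subset
  by (auto simp: extension_amal_in embed_def coset_stabiliser_def coset_function_def coset_count_def)

lemma coset_count_copy_quotient:
  assumes "h \<in> carrier G" "h \<notin> C"
  defines "t \<equiv> inv\<^bsub>amalgam G C\<^esub> amal_in G C False h \<otimes>\<^bsub>amalgam G C\<^esub> amal_in G C True h"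
  shows "extension t \<in> coset_stabiliser" "coset_count t = 1"
proof -
  have "group_hom G (amalgam G C) (amal_in G C False)"
    by (simp add: group_hom_def group_hom_axioms_def is_group group_amalgam amal_in_hom)
  then have "t = amal_in G C False (inv h) \<otimes>\<^bsub>amalgam G C\<^esub> amal_in G C True h"
    using assms(1) by (simp add: t_def group_hom.hom_inv)
  then have "extension t = twisted_embed (inv h) \<otimes>\<^bsub>semidirect\<^esub> embed h"
    using assms(1)
    by (simp add: hom_mult[OF extension_hom] hom_in_carrier[OF amal_in_hom] extension_amal_in)
  also have "\<dots> = (\<lambda>q. indicator C q - translate (inv h) (indicator C) q, \<one>)"
    using assms(1) by (simp add: twisted_embed_def embed_def translate_def fun_eq_iff)
  finally have t: "extension t = (\<lambda>q. indicator C q - translate (inv h) (indicator C) q, \<one>)" .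
  show "extension t \<in> coset_stabiliser"
    unfolding t coset_stabiliser_def using assms(1) subgroup.one_closed[OF subgroup_C]
    by (simp add: coset_function_diff coset_function_indicator coset_function_translate)
  show "coset_count t = 1"
    using assms(1,2) subgroup.one_closed[OF subgroup_C]
    by (simp add: coset_count_def t translate_def)
qed

end

theorem lemma3p3:
  fixes G :: "('a, 'b) monoid_scheme" and g h :: 'a
    and H :: "(('a \<times> bool) list set) monoid"
    and gH h1 h2 :: "('a \<times> bool) list set" and K :: "('a \<times> bool) list set set"
  assumes grp: "group G"
    and gh: "g \<in> carrier G" "h \<in> carrier G"
    and gen: "carrier G = generate G {g, h}"
    and noncyclic: "\<not> (\<exists>x \<in> carrier G. carrier G = generate G {x})"
    and torsion_free: "\<forall>x \<in> carrier G. \<forall>n::nat. n > 0 \<longrightarrow> x [^]\<^bsub>G\<^esub> n = \<one>\<^bsub>G\<^esub> \<longrightarrow> x = \<one>\<^bsub>G\<^esub>"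
    and H_def: "H = amalgam G (generate G {g})"
    and gH_def: "gH = amal_in G (generate G {g}) True g"
    and h1_def: "h1 = amal_in G (generate G {g}) True h"
    and h2_def: "h2 = amal_in G (generate G {g}) False h"
    and K_def: "K = generate H {inv\<^bsub>H\<^esub> h2 \<otimes>\<^bsub>H\<^esub> h1, gH}"
  shows "\<forall>n::int. n \<noteq> 0 \<longrightarrow>
           (inv\<^bsub>H\<^esub> h2 \<otimes>\<^bsub>H\<^esub> h1) [^]\<^bsub>H\<^esub> n \<notin> normal_closure_in H K gH"
proof (intro allI impI)
  fix n :: int
  assume "n \<noteq> 0"
  interpret G: group G by (rule grp)
  interpret coset_semidirect G "generate G {g}"
    using grp by (rule coset_semidirect.intro)
      (simp add: coset_semidirect_axioms_def G.generate_is_subgroup gh(1))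
  interpret H: group H
    unfolding H_def by (rule G.group_amalgam)
  let ?t = "inv\<^bsub>H\<^esub> h2 \<otimes>\<^bsub>H\<^esub> h1"
  have g: "g \<in> generate G {g}"
    by (simp add: generate.incl)
  have h: "h \<notin> generate G {g}"
    using gen gh(1) noncyclic by (rule G.notin_generate_singleton_if_noncyclic)
  have "gH \<in> carrier H" "h1 \<in> carrier H" "h2 \<in> carrier H"
    using gh unfolding H_def gH_def h1_def h2_def by (simp_all add: hom_in_carrier[OF G.amal_in_hom])
  then have carrier: "{?t, gH} \<subseteq> carrier H"
    by simp
  have t: "extension ?t \<in> coset_stabiliser" "coset_count ?t = 1"
    using coset_count_copy_quotient[OF gh(2) h] unfolding H_def h1_def h2_def .
  have gH: "extension gH \<in> coset_stabiliser" "coset_count gH = 0"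
    using coset_count_amal_in_subgroup[OF g] unfolding gH_def .
  have hom: "coset_count \<in> hom (H\<lparr>carrier := K\<rparr>) integer_group"
    unfolding K_def using carrier t(1) gH(1) by (intro coset_count_hom[folded H_def]) auto
  have "subgroup K H"
    unfolding K_def using carrier by (intro H.generate_is_subgroup)
  moreover have "gH \<in> K" "?t \<in> K"
    unfolding K_def by (simp_all add: generate.incl)
  ultimately show "?t [^]\<^bsub>H\<^esub> n \<notin> normal_closure_in H K gH"
    using hom gH(2) t(2) \<open>n \<noteq> 0\<close>
    by (intro H.int_pow_notin_normal_closure_in[where \<phi> = coset_count]) simp_all
qed

end
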